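(* Let $(D_n)_{n\geq1}$ be a sequence of non-empty finite sets of generalised digits, and suppose that the lengths and subdigits of all generalised digits in the sets $D_n$ are bounded. For a real $\gamma>1$, evaluate generalised digits at base $\gamma$ and let $\ell_n,u_n$ be the least and greatest elements of $D_n$, $\Delta_n=u_n-\ell_n$, and $\delta_n$ the largest gap between consecutive elements of $D_n$ ($\delta_n=0$ if $|D_n|=1$), all computed with respect to these values. Then for every real $\gamma$ such that $\mathrm{gr}(\bigoplus(\ell_n))\leq\gamma\leq\mathrm{gr}(\bigoplus(u_n))$ and $$\delta_n\leq\sum_{i=1}^\infty\Delta_{n+i}\,\gamma^{-i}\quad\text{for every } n\geq1,$$ there is a sequence $(a_n)$ with $a_n\in D_n$ for all $n$ such that $\gamma=\mathrm{gr}(\bigoplus(a_n))$.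
   Context: A generalised digit is a string $c_0.c_1\ldots c_k$ of non-negative integers (subdigits); its value in base $\gamma$ is $\sum_{i=0}^k c_i\gamma^{-i}$. A sequence $(a_n)_{n\geq1}$ of generalised digits, with $a_n=c^{(n)}_0.c^{(n)}_1\ldots c^{(n)}_{k_n}$, is equivalent to the integer sequence $(t_m)$ with $t_m=\sum_{n+i=m}c^{(n)}_i$ (i.e. $a_n$ contributes $c^{(n)}_i$ to position $n+i$); note $\sum_m t_m\gamma^{-m}=\sum_n a_n(\gamma)\gamma^{-n}$, where $a_n(\gamma)$ is the base-$\gamma$ value. For such a sequence, $\mathrm{gr}(\bigoplus(a_n))$ denotes the growth rate of the sum-closed permutation class $\bigoplus\mathcal{S}$ where $\mathcal{S}$ is a downward closed set of sum indecomposable permutations with $|\mathcal{S}_m|=t_m$; for bounded positive $(t_m)$ this is the unique real $\gamma>1$ with $\sum_m t_m\gamma^{-m}=1$. Here $\bigoplus\mathcal{S}$ is the set of permutations $\sigma_1\oplus\cdots\oplus\sigma_r$ with $\sigma_i\in\mathcal{S}$, $\sigma\oplus\tau$ being $\sigma$ followed by $\tau$ shifted up by the length of $\sigma$, and indecomposable means not such a sum of two shorter permutations. *)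

theory Defs
  imports Complex_Main "HOL-Library.Extended_Real"
begin

text \<open>A generalised digit c_0.c_1...c_k is a non-empty list of naturals [c_0,...,c_k].
  Its value in base g is the sum of c_i * g^(-i).\<close>
definition digval :: "real \<Rightarrow> nat list \<Rightarrow> real" where
  "digval g d = (\<Sum>i<length d. real (d ! i) * g powi (- int i))"

text \<open>The integer sequence t equivalent to a sequence (a_n)_{n>=1} of generalised digits:
  t_m = sum over n + i = m (n >= 1) of the i-th subdigit of a_n.\<close>
definition equiv_seq :: "(nat \<Rightarrow> nat list) \<Rightarrow> nat \<Rightarrow> nat" where
  "equiv_seq a m = (\<Sum>n\<in>{1..m}. if m - n < length (a n) then a n ! (m - n) else 0)"

definition comps :: "nat \<Rightarrow> nat list set" where
  "comps n = {ms. (\<forall>m\<in>set ms. 0 < m) \<and> sum_list ms = n}"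

text \<open>Number of permutations of length n in the sum closure of a set S of sum indecomposable
  permutations with |S_m| = t m: each such permutation is uniquely a sum of indecomposables,
  so the count is the sum over compositions of n of the products of the t's.\<close>
definition sum_closure_count :: "(nat \<Rightarrow> nat) \<Rightarrow> nat \<Rightarrow> nat" where
  "sum_closure_count t n = (\<Sum>ms\<in>comps n. prod_list (map t ms))"

definition gr_seq :: "(nat \<Rightarrow> nat) \<Rightarrow> real" where
  "gr_seq t = real_of_ereal (limsup (\<lambda>n. ereal (root n (real (sum_closure_count t n)))))"

definition gr :: "(nat \<Rightarrow> nat list) \<Rightarrow> real" where
  "gr a = gr_seq (equiv_seq a)"

definition maxgap :: "real set \<Rightarrow> real" where
  "maxgap V = (if card V \<le> 1 then 0 else
     Max {y - x | x y. x \<in> V \<and> y \<in> V \<and> x < y \<and> \<not> (\<exists>z\<in>V. x < z \<and> z < y)})"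

end

theory Submission
  imports Defs
begin

text \<open>
  The counts c_n of the sum closure satisfy c_n = \<Sum>_{m=1..n} t_m c_{n-m}, so for bounded t
  the growth rate is \<gamma> exactly when \<Sum>_m t_m \<gamma>^{-m} = 1, and \<le> \<gamma> (resp. \<ge> \<gamma>) forces this
  series to be \<le> 1 (resp. \<ge> 1). For a digit sequence that series equals
  \<Sum>_n a_n(\<gamma>) \<gamma>^{-n}, so the hypotheses on l and u say that the smallest and the largest
  reachable values bracket 1. Choose a_n greedily as the largest digit keeping
  a_1 \<gamma>^{-1} + ... + a_n \<gamma>^{-n} plus the minimal tail \<Sum>_{k>n} l_k \<gamma>^{-k} at most 1. Since the
  next larger digit overshoots and lies at most \<delta>_n above a_n, the gap condition keeps the
  partial sum plus the maximal tail at least 1, and the partial sums are squeezed to 1.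
\<close>

lemma comps_0: "comps 0 = {[]}"
  unfolding comps_def by (auto simp: sum_list_eq_0_iff) (case_tac x, auto)

lemma comps_subset: "comps n \<subseteq> {xs. set xs \<subseteq> {0..n} \<and> length xs \<le> n}"
proof
  fix xs assume "xs \<in> comps n"
  then have pos: "\<forall>m\<in>set xs. 0 < m" and s: "sum_list xs = n" by (auto simp: comps_def)
  have "\<forall>m\<in>set xs. m \<le> n" using s member_le_sum_list by blast
  moreover have "length xs \<le> sum_list xs" using pos
    by (induction xs) auto
  ultimately show "xs \<in> {xs. set xs \<subseteq> {0..n} \<and> length xs \<le> n}" using s by auto
qed

lemma finite_comps: "finite (comps n)"
  by (rule finite_subset[OF comps_subset finite_lists_length_le]) auto

lemma comps_Suc: "comps (Suc n) = (\<lambda>(m,ys). m # ys) ` (SIGMA m:{1..Suc n}. comps (Suc n - m))"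
proof (rule set_eqI, rule iffI)
  fix xs assume xs: "xs \<in> comps (Suc n)"
  then obtain m ys where "xs = m # ys" unfolding comps_def by (cases xs) auto
  with xs show "xs \<in> (\<lambda>(m,ys). m # ys) ` (SIGMA m:{1..Suc n}. comps (Suc n - m))"
    unfolding comps_def by (auto intro!: image_eqI[of _ _ "(m,ys)"])
next
  fix xs assume "xs \<in> (\<lambda>(m,ys). m # ys) ` (SIGMA m:{1..Suc n}. comps (Suc n - m))"
  then show "xs \<in> comps (Suc n)" unfolding comps_def by auto
qed

lemma sum_closure_count_0: "sum_closure_count t 0 = 1"
  by (simp add: sum_closure_count_def comps_0)

lemma sum_closure_count_Suc: "sum_closure_count t (Suc n) = (\<Sum>m\<in>{1..Suc n}. t m * sum_closure_count t (Suc n - m))"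
proof -
  have inj: "inj_on (\<lambda>(m,ys). m # ys) (SIGMA m:{1..Suc n}. comps (Suc n - m))"
    by (auto simp: inj_on_def)
  have "sum_closure_count t (Suc n) = (\<Sum>(m,ys)\<in>(SIGMA m:{1..Suc n}. comps (Suc n - m)). prod_list (map t (m # ys)))"
    unfolding sum_closure_count_def comps_Suc by (subst sum.reindex[OF inj]) (simp add: case_prod_unfold)
  also have "\<dots> = (\<Sum>m\<in>{1..Suc n}. \<Sum>ys\<in>comps (Suc n - m). t m * prod_list (map t ys))"
    by (subst sum.Sigma[symmetric]) (auto simp: finite_comps)
  also have "\<dots> = (\<Sum>m\<in>{1..Suc n}. t m * sum_closure_count t (Suc n - m))"
    by (simp add: sum_closure_count_def sum_distrib_left)
  finally show ?thesis .
qed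

lemma sum_closure_count_power_rec:
  fixes t :: "nat \<Rightarrow> nat" and y :: real
  assumes "n > 0"
  shows "real (sum_closure_count t n) * y^n =
    (\<Sum>m\<in>{1..n}. (real (t m) * y^m) * (real (sum_closure_count t (n-m)) * y^(n-m)))"
proof -
  obtain k where n: "n = Suc k" using assms by (cases n) auto
  have "real (sum_closure_count t n) * y^n = (\<Sum>m\<in>{1..n}. real (t m) * real (sum_closure_count t (n-m)) * y^n)"
    by (simp only: n sum_closure_count_Suc of_nat_sum of_nat_mult sum_distrib_right)
  also have "\<dots> = (\<Sum>m\<in>{1..n}. (real (t m) * y^m) * (real (sum_closure_count t (n-m)) * y^(n-m)))"
  proof (rule sum.cong)
    fix m assume "m \<in> {1..n}"
    then have "y^n = y^m * y^(n-m)" by (simp add: power_add[symmetric])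
    then show "real (t m) * real (sum_closure_count t (n-m)) * y^n = (real (t m) * y^m) * (real (sum_closure_count t (n-m)) * y^(n-m))"
      by (simp add: algebra_simps)
  qed simp
  finally show ?thesis .
qed

lemma sum_closure_count_power_le_1:
  fixes t :: "nat \<Rightarrow> nat" and x :: real
  assumes x: "x > 0" and sm: "summable (\<lambda>m. real (t m) * x^m)"
    and le1: "(\<Sum>m. real (t m) * x^m) \<le> 1"
  shows "real (sum_closure_count t n) * x^n \<le> 1"
proof (induction n rule: less_induct)
  case (less n)
  show ?case
  proof (cases "n = 0")
    case True then show ?thesis by (simp add: sum_closure_count_0)
  next
    case False
    have nn: "0 \<le> real (t m) * x^m" for m using x by simp
    have "real (sum_closure_count t n) * x^n =
      (\<Sum>m\<in>{1..n}. (real (t m) * x^m) * (real (sum_closure_count t (n-m)) * x^(n-m)))"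
      using False by (simp add: sum_closure_count_power_rec)
    also have "\<dots> \<le> (\<Sum>m\<in>{1..n}. real (t m) * x^m)"
    proof (rule sum_mono)
      fix m assume m: "m \<in> {1..n}"
      then have "real (sum_closure_count t (n-m)) * x^(n-m) \<le> 1" using less by auto
      then show "(real (t m) * x^m) * (real (sum_closure_count t (n-m)) * x^(n-m)) \<le> real (t m) * x^m"
        using nn[of m] by (simp add: mult_left_le)
    qed
    also have "\<dots> \<le> (\<Sum>m<Suc n. real (t m) * x^m)"
      by (rule sum_mono2) (auto simp: nn)
    also have "\<dots> \<le> (\<Sum>m. real (t m) * x^m)"
      by (rule sum_le_suminf[OF sm]) (auto simp: nn)
    finally show ?thesis using le1 by linarith
  qed
qed

lemma limsup_root_count_le:
  fixes t :: "nat \<Rightarrow> nat" and x :: real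
  assumes x: "x > 0" and b: "\<And>n. real (sum_closure_count t n) * x^n \<le> 1"
  shows "limsup (\<lambda>n. ereal (root n (real (sum_closure_count t n)))) \<le> ereal (1/x)"
proof (rule Limsup_bounded, rule always_eventually, rule allI)
  fix n
  show "ereal (root n (real (sum_closure_count t n))) \<le> ereal (1/x)"
  proof (cases "n = 0")
    case True then show ?thesis using x by simp
  next
    case False
    have "real (sum_closure_count t n) \<le> (1/x)^n"
      using b[of n] x by (simp add: field_simps power_divide)
    then have "root n (real (sum_closure_count t n)) \<le> root n ((1/x)^n)"
      using False by (simp add: real_root_le_iff)
    also have "\<dots> = 1/x" using False x by (simp add: real_root_power_cancel)
    finally show ?thesis by simp
  qed
qed

lemma limsup_root_count_nonneg:
  "0 \<le> limsup (\<lambda>n. ereal (root n (real (sum_closure_count t n))))"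
  by (rule le_Limsup) (auto intro!: always_eventually real_root_ge_zero)

lemma limsup_root_count_ge_if_not_summable:
  fixes t :: "nat \<Rightarrow> nat" and y :: real
  assumes y: "y > 0" and ns: "\<not> summable (\<lambda>n. real (sum_closure_count t n) * y^n)"
  shows "ereal (1/y) \<le> limsup (\<lambda>n. ereal (root n (real (sum_closure_count t n))))"
proof (rule ccontr)
  assume "\<not> ?thesis"
  then have "limsup (\<lambda>n. ereal (root n (real (sum_closure_count t n)))) < ereal (1/y)" by simp
  then obtain \<rho> where r1: "limsup (\<lambda>n. ereal (root n (real (sum_closure_count t n)))) < ereal \<rho>"
      and r2: "ereal \<rho> < ereal (1/y)"
    using ereal_dense2 by blast
  have ev: "eventually (\<lambda>n. ereal (root n (real (sum_closure_count t n))) < ereal \<rho>) sequentially"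
    using Limsup_lessD[OF r1] .
  have key: "norm (real (sum_closure_count t n) * y^n) \<le> (\<rho>*y)^n"
    if n: "0 < n" and lt: "ereal (root n (real (sum_closure_count t n))) < ereal \<rho>" for n
  proof -
    have lt': "root n (real (sum_closure_count t n)) < \<rho>" using lt by simp
    have "0 \<le> root n (real (sum_closure_count t n))" by (simp add: real_root_ge_zero)
    then have "(root n (real (sum_closure_count t n)))^n \<le> \<rho>^n"
      using lt' by (intro power_mono) auto
    then have "real (sum_closure_count t n) \<le> \<rho>^n" using n by (simp add: real_root_pow_pos2)
    then show "norm (real (sum_closure_count t n) * y^n) \<le> (\<rho>*y)^n"
      using y by (simp add: power_mult_distrib mult_right_mono)
  qed
  have ev2: "eventually (\<lambda>n. norm (real (sum_closure_count t n) * y^n) \<le> (\<rho>*y)^n) sequentially"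
    using ev eventually_gt_at_top[of "0::nat"] by eventually_elim (rule key)
  have "\<rho> * y < 1" using r2 y by (simp add: field_simps)
  moreover have "0 \<le> \<rho>"
  proof -
    obtain n where "0 < n" "root n (real (sum_closure_count t n)) < \<rho>"
      using eventually_happens'[OF _ eventually_conj[OF ev eventually_gt_at_top[of 0]]] by auto
    moreover have "0 \<le> root n (real (sum_closure_count t n))" by (simp add: real_root_ge_zero)
    ultimately show ?thesis by linarith
  qed
  ultimately have "summable (\<lambda>n. (\<rho>*y)^n)" using y by (intro summable_geometric) simp
  then have "summable (\<lambda>n. real (sum_closure_count t n) * y^n)"
    using summable_comparison_test_ev[OF ev2] by blast
  with ns show False by simp
qed

lemma partial_sums_count_power_rec:
  fixes t :: "nat \<Rightarrow> nat" and y :: real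
  defines "e \<equiv> \<lambda>n. real (sum_closure_count t n) * y^n"
  defines "w \<equiv> \<lambda>m. real (t m) * y^m"
  defines "S \<equiv> \<lambda>N. \<Sum>n<N. e n"
  shows "S (Suc N) = 1 + (\<Sum>m\<in>{1..N}. w m * S (Suc N - m))"
proof (induction N)
  case 0 then show ?case by (simp add: S_def e_def sum_closure_count_0)
next
  case (Suc N)
  have er: "e (Suc N) = (\<Sum>m\<in>{1..Suc N}. w m * e (Suc N - m))"
    unfolding e_def w_def by (rule sum_closure_count_power_rec) simp
  have "(\<Sum>m\<in>{1..Suc N}. w m * S (Suc (Suc N) - m))
      = (\<Sum>m\<in>{1..Suc N}. w m * S (Suc N - m) + w m * e (Suc N - m))"
  proof (rule sum.cong)
    fix m assume "m \<in> {1..Suc N}"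
    then have "Suc (Suc N) - m = Suc (Suc N - m)" by auto
    then show "w m * S (Suc (Suc N) - m) = w m * S (Suc N - m) + w m * e (Suc N - m)"
      by (simp add: S_def algebra_simps)
  qed simp
  also have "\<dots> = (\<Sum>m\<in>{1..Suc N}. w m * S (Suc N - m)) + e (Suc N)"
    by (simp add: sum.distrib er)
  also have "(\<Sum>m\<in>{1..Suc N}. w m * S (Suc N - m)) = (\<Sum>m\<in>{1..N}. w m * S (Suc N - m))"
    by (simp add: S_def)
  finally show ?case using Suc by (simp add: S_def)
qed

lemma not_summable_count_power:
  fixes t :: "nat \<Rightarrow> nat" and y :: real
  assumes y: "y > 0" and t0: "t 0 = 0" and M: "1 \<le> (\<Sum>m<M. real (t m) * y^m)"
  shows "\<not> summable (\<lambda>n. real (sum_closure_count t n) * y^n)"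
proof
  define e where "e = (\<lambda>n. real (sum_closure_count t n) * y^n)"
  define w where "w = (\<lambda>m. real (t m) * y^m)"
  define S where "S = (\<lambda>N. \<Sum>n<N. e n)"
  assume sm: "summable (\<lambda>n. real (sum_closure_count t n) * y^n)"
  have e0: "0 \<le> e n" for n using y by (simp add: e_def)
  have w0: "0 \<le> w n" for n using y by (simp add: w_def)
  have Smono: "S a \<le> S b" if "a \<le> b" for a b
    unfolding S_def by (rule sum_mono2) (use that e0 in auto)
  have S0: "0 \<le> S a" for a unfolding S_def by (simp add: sum_nonneg e0)
  have Mpos: "M \<ge> 1" using M by (cases M) auto
  have step: "1 + S (Suc N - M) \<le> S (Suc N)" if N: "N \<ge> M" for N
  proof -
    have rec: "S (Suc N) = 1 + (\<Sum>m\<in>{1..N}. w m * S (Suc N - m))"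
      unfolding S_def e_def w_def by (rule partial_sums_count_power_rec)
    have "(\<Sum>m<M. w m) = (\<Sum>m\<in>{1..<M}. w m)"
      using t0 Mpos by (simp add: w_def lessThan_atLeast0 sum.atLeast_Suc_lessThan)
    then have "S (Suc N - M) \<le> (\<Sum>m\<in>{1..<M}. w m) * S (Suc N - M)"
      using M S0[of "Suc N - M"] unfolding w_def by (metis mult_le_cancel_right1 not_less)
    also have "\<dots> \<le> (\<Sum>m\<in>{1..<M}. w m * S (Suc N - m))"
      unfolding sum_distrib_right by (rule sum_mono) (use w0 in \<open>auto intro!: mult_left_mono Smono\<close>)
    also have "\<dots> \<le> (\<Sum>m\<in>{1..N}. w m * S (Suc N - m))"
      by (rule sum_mono2) (use N w0 S0 in auto)
    also have "\<dots> = S (Suc N) - 1" using rec by simp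
    finally show ?thesis by simp
  qed
  have big: "S (Suc (k * M)) \<ge> real k + 1" for k
  proof (induction k)
    case 0 then show ?case by (simp add: S_def e_def sum_closure_count_0)
  next
    case (Suc k)
    have "1 + S (Suc (Suc k * M) - M) \<le> S (Suc (Suc k * M))" by (rule step) simp
    moreover have "Suc (Suc k * M) - M = Suc (k * M)" by simp
    ultimately show ?case using Suc by simp
  qed
  have le: "S N \<le> suminf e" for N
    unfolding S_def using sm e0 by (intro sum_le_suminf) (auto simp: e_def)
  obtain k :: nat where "suminf e < real k" using reals_Archimedean2 by blast
  with big[of k] le[of "Suc (k*M)"] show False by simp
qed

lemma limsup_root_count_bounded:
  fixes t :: "nat \<Rightarrow> nat"
  assumes K: "\<And>m. t m \<le> K" and t0: "t 0 = 0"
  shows "limsup (\<lambda>n. ereal (root n (real (sum_closure_count t n)))) \<le> ereal (4 * real K + 4)"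
proof -
  define x0 :: real where "x0 = 1/(4*real K+4)"
  have x0: "0 < x0" "x0 \<le> 1/4" "real K * x0 \<le> 1/4" by (auto simp: x0_def field_simps)
  have bnd: "norm (real (t m) * x0^m) \<le> (1/2::real)^Suc m" for m
  proof (cases m)
    case 0 then show ?thesis using t0 by simp
  next
    case (Suc k)
    have "real (t m) * x0^m \<le> real K * x0^m" using K[of m] x0 by (intro mult_right_mono) auto
    also have "\<dots> = (real K * x0) * x0^k" using Suc by simp
    also have "\<dots> \<le> (1/4) * (1/2)^k"
      using x0 by (intro mult_mono power_mono) auto
    also have "\<dots> = (1/2::real)^Suc m" using Suc by simp
    finally show ?thesis using x0 by simp
  qed
  have bnd': "real (t m) * x0^m \<le> (1/2::real)^Suc m" for m
    by (metis bnd abs_ge_self order_trans real_norm_def)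
  have sm: "summable (\<lambda>m. real (t m) * x0^m)"
    by (rule summable_comparison_test[OF _ sums_summable[OF power_half_series]]) (use bnd in auto)
  have "(\<Sum>m. real (t m) * x0^m) \<le> (\<Sum>m. (1/2::real)^Suc m)"
    by (rule suminf_le) (use bnd' sm sums_summable[OF power_half_series] in auto)
  also have "\<dots> = 1" using power_half_series sums_unique by metis
  finally have "(\<Sum>m. real (t m) * x0^m) \<le> 1" .
  then have "\<And>n. real (sum_closure_count t n) * x0^n \<le> 1" using sum_closure_count_power_le_1 x0 sm by blast
  then show ?thesis using limsup_root_count_le[OF x0(1)] by (simp add: x0_def)
qed

lemma real_of_ereal_le_ereal: "0 \<le> z \<Longrightarrow> z \<le> ereal b \<Longrightarrow> real_of_ereal z \<le> b"
  by (cases z) auto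

lemma ereal_le_real_of_ereal: "ereal a \<le> z \<Longrightarrow> z \<le> ereal b \<Longrightarrow> a \<le> real_of_ereal z"
  by (cases z) auto

lemma gr_seq_le_inverse:
  fixes t :: "nat \<Rightarrow> nat" and x :: real
  assumes x: "x > 0" and sm: "summable (\<lambda>m. real (t m) * x^m)"
    and le1: "(\<Sum>m. real (t m) * x^m) \<le> 1"
  shows "gr_seq t \<le> 1/x"
  unfolding gr_seq_def
  by (rule real_of_ereal_le_ereal[OF limsup_root_count_nonneg
        limsup_root_count_le[OF x sum_closure_count_power_le_1[OF x sm le1]]])

lemma gr_seq_ge_inverse:
  fixes t :: "nat \<Rightarrow> nat" and y :: real
  assumes K: "\<And>m. t m \<le> K" and t0: "t 0 = 0" and y: "y > 0"
    and M: "1 \<le> (\<Sum>m<M. real (t m) * y^m)"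
  shows "1/y \<le> gr_seq t"
  unfolding gr_seq_def
  by (rule ereal_le_real_of_ereal[OF
        limsup_root_count_ge_if_not_summable[OF y not_summable_count_power[OF y t0 M]]
        limsup_root_count_bounded[of t K, OF K t0]])

lemma partial_sum_gt_if_sums_gt:
  fixes f :: "nat \<Rightarrow> real"
  assumes "f sums F" "c < F"
  shows "\<exists>M. c < (\<Sum>m<M. f m)"
proof -
  have "eventually (\<lambda>n. c < (\<Sum>m<n. f m)) sequentially"
    using order_tendstoD(1)[OF assms(1)[unfolded sums_def] assms(2)] .
  then show ?thesis by (auto simp: eventually_sequentially)
qed

lemma gf_le_1_if_gr_seq_le:
  fixes t :: "nat \<Rightarrow> nat" and x :: real
  assumes K: "\<And>m. t m \<le> K" and t0: "t 0 = 0" and x: "0 < x" "x < 1"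
    and s: "(\<lambda>m. real (t m) * x^m) sums F" and g: "gr_seq t \<le> 1/x"
  shows "F \<le> 1"
proof (rule ccontr)
  assume "\<not> F \<le> 1"
  then obtain M where P1: "1 < (\<Sum>m<M. real (t m) * x^m)" using partial_sum_gt_if_sums_gt[OF s] by force
  define P where "P = (\<Sum>m<M. real (t m) * x^m)"
  have M0: "M > 0" using P1 by (cases M) auto
  \<comment> \<open>with \<theta>^M = 1/P the first M terms at x\<theta> still sum to at least 1, so gr_seq t \<ge> 1/(x\<theta>) > 1/x\<close>
  define \<theta> where "\<theta> = root M (1/P)"
  have Ppos: "P > 1" using P1 P_def by simp
  have th0: "0 < \<theta>" using Ppos M0 by (simp add: \<theta>_def)
  have th1: "\<theta> < 1" using Ppos M0 by (simp add: \<theta>_def)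
  have thM: "\<theta>^M = 1/P" using Ppos M0 by (simp add: \<theta>_def real_root_pow_pos)
  have "1 = \<theta>^M * P" using thM Ppos by simp
  also have "\<dots> = (\<Sum>m<M. real (t m) * x^m * \<theta>^M)" by (simp add: P_def sum_distrib_left mult_ac)
  also have "\<dots> \<le> (\<Sum>m<M. real (t m) * (x * \<theta>)^m)"
  proof (rule sum_mono)
    fix m assume "m \<in> {..<M}"
    then have "\<theta>^M \<le> \<theta>^m" using th0 th1 by (intro power_decreasing) auto
    then have h1: "x^m * \<theta>^M \<le> x^m * \<theta>^m" using x by (simp add: mult_left_mono)
    have "real (t m) * (x^m * \<theta>^M) \<le> real (t m) * (x^m * \<theta>^m)" using h1 by (simp add: mult_left_mono)
    then show "real (t m) * x^m * \<theta>^M \<le> real (t m) * (x * \<theta>)^m"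
      by (simp add: power_mult_distrib mult_ac)
  qed
  finally have "1/(x*\<theta>) \<le> gr_seq t" using gr_seq_ge_inverse[of t K, OF K t0] x th0 by simp
  moreover have "1/x < 1/(x*\<theta>)" using x th0 th1 by (simp add: field_simps)
  ultimately show False using g by simp
qed

lemma gf_ge_1_if_gr_seq_ge:
  fixes t :: "nat \<Rightarrow> nat" and x :: real
  assumes K: "\<And>m. t m \<le> K" and x: "0 < x" "x < 1"
    and s: "(\<lambda>m. real (t m) * x^m) sums F" and g: "1/x \<le> gr_seq t"
  shows "1 \<le> F"
proof (rule ccontr)
  assume F: "\<not> 1 \<le> F"
  define f where "f = (\<lambda>z::real. \<Sum>n. real (t n) * z^n)"
  have smz: "summable (\<lambda>n. real (t n) * z^n)" if "0 \<le> z" "z < 1" for z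
  proof (rule summable_comparison_test[of _ "\<lambda>n. real K * z^n"])
    show "\<exists>N. \<forall>n\<ge>N. norm (real (t n) * z ^ n) \<le> real K * z ^ n"
      using K that by (auto intro!: mult_right_mono)
    show "summable (\<lambda>n. real K * z ^ n)" using that by (intro summable_mult summable_geometric) auto
  qed
  define Kp where "Kp = (1 + x)/2"
  have Kp: "x < Kp" "Kp < 1" using x by (auto simp: Kp_def)
  have "isCont f x" unfolding f_def
    by (rule isCont_powser[of _ Kp]) (use smz Kp x in auto)
  then have "(f \<longlongrightarrow> f x) (at x)" by (simp add: isCont_def)
  moreover have "f x = F" using s by (simp add: f_def sums_iff)
  ultimately have "eventually (\<lambda>z. f z < 1) (at x)" using F by (simp add: order_tendstoD(2))
  then obtain d where d: "d > 0" "\<And>z. z \<noteq> x \<Longrightarrow> dist z x < d \<Longrightarrow> f z < 1"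
    by (auto simp: eventually_at)
  define mm where "mm = min d (Kp - x)"
  define z where "z = x + mm / 2"
  have mn: "0 < mm" "mm \<le> d" "mm \<le> Kp - x" using d Kp by (auto simp: mm_def)
  have z1: "x < z" "dist z x < d" using mn by (auto simp: z_def dist_real_def)
  have z2: "z < 1" unfolding z_def using mn(3) Kp by linarith
  note z = z1(1) z2 z1(2)
  have "f z < 1" using d z by auto
  then have "gr_seq t \<le> 1/z" using gr_seq_le_inverse[of z t] smz[of z] z x unfolding f_def by simp
  moreover have "1/z < 1/x" using z x by (simp add: field_simps)
  ultimately show False using g by simp
qed

lemma gr_seq_eq_if_gf_sums_1:
  fixes t :: "nat \<Rightarrow> nat" and x :: real
  assumes K: "\<And>m. t m \<le> K" and t0: "t 0 = 0" and x: "0 < x" "x < 1"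
    and s: "(\<lambda>m. real (t m) * x^m) sums 1"
  shows "gr_seq t = 1/x"
proof (rule antisym)
  show "gr_seq t \<le> 1/x" using gr_seq_le_inverse[OF x(1)] s by (simp add: sums_iff)
  show "1/x \<le> gr_seq t"
  proof (rule field_le_mult_one_interval)
    fix \<theta> :: real assume th: "0 < \<theta>" "\<theta> < 1"
    obtain M where M: "\<theta> < (\<Sum>m<M. real (t m) * x^m)" using partial_sum_gt_if_sums_gt[OF s th(2)] by blast
    have "1 \<le> (\<Sum>m<M. real (t m) * x^m) / \<theta>" using M th by simp
    also have "\<dots> = (\<Sum>m<M. real (t m) * x^m / \<theta>)" by (simp add: sum_divide_distrib)
    also have "\<dots> \<le> (\<Sum>m<M. real (t m) * (x/\<theta>)^m)"
    proof (rule sum_mono)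
      fix m assume "m \<in> {..<M}"
      show "real (t m) * x^m / \<theta> \<le> real (t m) * (x/\<theta>)^m"
      proof (cases m)
        case 0 then show ?thesis using t0 by simp
      next
        case (Suc k)
        have "\<theta>^m \<le> \<theta>" using th Suc by (simp add: mult_le_cancel_left1 power_le_one)
        then have h0: "1/\<theta> \<le> 1/\<theta>^m" using th by (simp add: frac_le)
        have h1: "x^m * (1/\<theta>) \<le> x^m * (1/\<theta>^m)" by (rule mult_left_mono[OF h0]) (use x in simp)
        have h2: "real (t m) * (x^m * (1/\<theta>)) \<le> real (t m) * (x^m * (1/\<theta>^m))" by (rule mult_left_mono[OF h1]) simp
        have e1: "real (t m) * x^m / \<theta> = real (t m) * (x^m * (1/\<theta>))" by simp
        have e2: "real (t m) * (x/\<theta>)^m = real (t m) * (x^m * (1/\<theta>^m))" by (simp add: power_divide)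
        show ?thesis unfolding e1 e2 by (rule h2)
      qed
    qed
    finally have "1/(x/\<theta>) \<le> gr_seq t" using gr_seq_ge_inverse[of t K, OF K t0, of "x/\<theta>"] x th by simp
    then show "\<theta> * (1/x) \<le> gr_seq t" by simp
  qed
qed

lemma digval_eq_power_sum: "g > 0 \<Longrightarrow> digval g d = (\<Sum>i<length d. real (d!i) * (1/g)^i)"
  unfolding digval_def by (simp add: power_int_minus power_one_over power_inverse divide_inverse)

lemma equiv_seq_eq_sum_lessThan:
  fixes a :: "nat \<Rightarrow> nat list"
  assumes len: "\<forall>n\<ge>1. length (a n) \<le> L"
  shows "equiv_seq a m = (\<Sum>i<L. if i < m then (if i < length (a (m-i)) then a (m-i) ! i else 0) else 0)"
proof -
  define cc where "cc = (\<lambda>n i. if i < length (a n) then a n ! i else 0)"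
  have lenm: "\<And>i. i < m \<Longrightarrow> length (a (m-i)) \<le> L" using len by auto
  have "equiv_seq a m = (\<Sum>n\<in>{1..m}. cc n (m-n))" unfolding equiv_seq_def cc_def by simp
  also have "\<dots> = (\<Sum>i<m. cc (m-i) i)"
    by (rule sum.reindex_bij_witness[of _ "\<lambda>i. m - i" "\<lambda>n. m - n"]) auto
  also have "\<dots> = (\<Sum>i\<in>{..<m} \<inter> {..<L}. cc (m-i) i)"
    by (rule sum.mono_neutral_right) (auto simp: cc_def dest: lenm)
  also have "\<dots> = (\<Sum>i\<in>{..<L} \<inter> {..<m}. cc (m-i) i)" by (simp add: Int_commute)
  also have "\<dots> = (\<Sum>i<L. if i < m then cc (m-i) i else 0)"
    by (subst sum.inter_restrict) auto
  finally show ?thesis unfolding cc_def .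
qed

lemma sum_nth_eq_sum_padded:
  assumes "length d \<le> L"
  shows "(\<Sum>i<length d. real (d!i) * x^i) = (\<Sum>i<L. real (if i < length d then d ! i else 0) * x^i)"
  by (rule sum.mono_neutral_cong_left) (use assms in auto)

lemma delayed_power_series_sums:
  fixes c :: "nat \<Rightarrow> real"
  assumes "summable (\<lambda>k. c (Suc k) * x ^ Suc k)"
  shows "(\<lambda>m. if i < m then c (m - i) * x ^ m else 0) sums (x ^ i * (\<Sum>k. c (Suc k) * x ^ Suc k))"
proof -
  have "(\<lambda>k. x ^ i * (c (Suc k) * x ^ Suc k)) sums (x ^ i * (\<Sum>k. c (Suc k) * x ^ Suc k))"
    by (rule sums_mult[OF summable_sums[OF assms]])
  moreover have "(\<lambda>k. x ^ i * (c (Suc k) * x ^ Suc k))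
      = (\<lambda>k. (\<lambda>m. if i < m then c (m - i) * x ^ m else 0) (k + Suc i))"
    by (auto simp: power_add[symmetric] algebra_simps)
  ultimately have "(\<lambda>k. (\<lambda>m. if i < m then c (m - i) * x ^ m else 0) (k + Suc i))
      sums (x ^ i * (\<Sum>k. c (Suc k) * x ^ Suc k))"
    by simp
  then show ?thesis by (subst (asm) sums_iff_shift) simp
qed

lemma equiv_seq_power_sums:
  fixes a :: "nat \<Rightarrow> nat list" and x :: real
  assumes x: "0 < x" "x < 1" and len: "\<forall>n\<ge>1. length (a n) \<le> L"
    and ent: "\<forall>n\<ge>1. \<forall>c\<in>set (a n). c \<le> B"
  shows "(\<lambda>m. real (equiv_seq a m) * x^m) sums
           (\<Sum>k. (\<Sum>i<length (a (Suc k)). real (a (Suc k) ! i) * x^i) * x^(Suc k))"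
proof -
  define cc where "cc = (\<lambda>n i. if i < length (a n) then a n ! i else 0)"
  have ccB: "cc n i \<le> B" if "n \<ge> 1" for n i
    using ent that unfolding cc_def by (auto simp: nth_mem)
  define h where "h = (\<lambda>i k. real (cc (Suc k) i) * x^(Suc k))"
  have hs: "summable (h i)" for i
  proof (rule summable_comparison_test[of _ "\<lambda>k. real B * x^(Suc k)"])
    show "\<exists>N. \<forall>n\<ge>N. norm (h i n) \<le> real B * x ^ Suc n"
      using ccB x by (auto simp: h_def intro!: mult_right_mono)
    show "summable (\<lambda>k. real B * x ^ Suc k)" using x
      by (intro summable_mult summable_mult2) (auto intro!: summable_geometric)
  qed
  have E3: "(\<lambda>m. if i < m then real (cc (m-i) i) * x^m else 0) sums (x^i * suminf (h i))" for i
    using delayed_power_series_sums[OF hs[unfolded h_def]] by (simp add: h_def)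
  have "(\<lambda>m. \<Sum>i<L. if i < m then real (cc (m-i) i) * x^m else 0) sums (\<Sum>i<L. x^i * suminf (h i))"
    by (rule sums_sum) (rule E3)
  moreover have "(\<lambda>m. \<Sum>i<L. if i < m then real (cc (m-i) i) * x^m else 0) = (\<lambda>m. real (equiv_seq a m) * x^m)"
  proof
    fix m
    show "(\<Sum>i<L. if i < m then real (cc (m-i) i) * x^m else 0) = real (equiv_seq a m) * x^m"
      unfolding equiv_seq_eq_sum_lessThan[OF len, of m] cc_def of_nat_sum sum_distrib_right by (intro sum.cong) auto
  qed
  moreover have "(\<Sum>i<L. x^i * suminf (h i)) = (\<Sum>k. (\<Sum>i<length (a (Suc k)). real (a (Suc k) ! i) * x^i) * x^(Suc k))"
  proof -
    have "(\<Sum>i<L. x^i * suminf (h i)) = (\<Sum>i<L. \<Sum>k. x^i * h i k)"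
      by (simp add: suminf_mult hs)
    also have "\<dots> = (\<Sum>k. \<Sum>i<L. x^i * h i k)"
      by (rule suminf_sum[symmetric]) (simp add: summable_mult hs)
    also have "\<dots> = (\<Sum>k. (\<Sum>i<length (a (Suc k)). real (a (Suc k) ! i) * x^i) * x^(Suc k))"
    proof (rule arg_cong[where f=suminf], rule ext)
      fix k
      have "(\<Sum>i<length (a (Suc k)). real (a (Suc k) ! i) * x^i) = (\<Sum>i<L. real (cc (Suc k) i) * x^i)"
        unfolding cc_def by (rule sum_nth_eq_sum_padded) (use len in auto)
      then show "(\<Sum>i<L. x^i * h i k) = (\<Sum>i<length (a (Suc k)). real (a (Suc k) ! i) * x^i) * x^(Suc k)"
        by (simp add: h_def sum_distrib_left sum_distrib_right mult_ac)
    qed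
    finally show ?thesis .
  qed
  ultimately show ?thesis by simp
qed

lemma equiv_seq_le:
  fixes a :: "nat \<Rightarrow> nat list"
  assumes len: "\<forall>n\<ge>1. length (a n) \<le> L" and ent: "\<forall>n\<ge>1. \<forall>c\<in>set (a n). c \<le> B"
  shows "equiv_seq a m \<le> L * B"
proof -
  have entm: "\<And>i. i < m \<Longrightarrow> i < length (a (m-i)) \<Longrightarrow> a (m-i) ! i \<le> B"
  proof -
    fix i assume "i < m" "i < length (a (m-i))"
    then have "m - i \<ge> 1" "a (m-i) ! i \<in> set (a (m-i))" by (auto simp: nth_mem)
    then show "a (m-i) ! i \<le> B" using ent by blast
  qed
  have "equiv_seq a m \<le> (\<Sum>i<L. B)"
    unfolding equiv_seq_eq_sum_lessThan[OF len, of m]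
    by (rule sum_mono) (use entm in \<open>auto simp: nth_mem\<close>)
  then show ?thesis by simp
qed

lemma equiv_seq_0: "equiv_seq a 0 = 0"
  by (simp add: equiv_seq_def)

lemma le_maxgap:
  fixes V :: "real set"
  assumes fin: "finite V" and ab: "a \<in> V" "b \<in> V" "a < b" and no: "\<not> (\<exists>z\<in>V. a < z \<and> z < b)"
  shows "b - a \<le> maxgap V"
proof -
  have "card {a, b} \<le> card V" using ab fin by (intro card_mono) auto
  then have c: "\<not> card V \<le> 1" using ab by auto
  define S where "S = {y - x | x y. x \<in> V \<and> y \<in> V \<and> x < y \<and> \<not> (\<exists>z\<in>V. x < z \<and> z < y)}"
  have "S \<subseteq> (\<lambda>(x, y). y - x) ` (V \<times> V)" unfolding S_def by auto
  then have "finite S" using fin by (meson finite_SigmaI finite_imageI finite_subset)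
  moreover have "b - a \<in> S" unfolding S_def using ab no by blast
  ultimately have "b - a \<le> Max S" by simp
  then show ?thesis using c unfolding maxgap_def S_def by simp
qed

lemma digval_nonneg: "0 < g \<Longrightarrow> 0 \<le> digval g d"
  unfolding digval_def by (intro sum_nonneg) simp

lemma digval_le:
  assumes g: "1 \<le> g" and len: "length d \<le> L" and ent: "\<forall>c\<in>set d. c \<le> B"
  shows "digval g d \<le> real (L * B)"
proof -
  have "digval g d = (\<Sum>i<length d. real (d!i) * (1/g)^i)"
    using g by (simp add: digval_eq_power_sum)
  also have "\<dots> \<le> (\<Sum>i<length d. real B)"
  proof (rule sum_mono)
    fix i assume "i \<in> {..<length d}"
    then have "real (d ! i) \<le> real B" using ent by (simp add: nth_mem)
    moreover have "(1/g)^i \<le> 1" using g by (simp add: power_le_one)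
    ultimately show "real (d!i) * (1/g)^i \<le> real B"
      using mult_mono[of "real (d ! i)" "real B" "(1/g)^i" 1] g by simp
  qed
  also have "\<dots> \<le> real (L * B)" using len by (simp add: mult_right_mono)
  finally show ?thesis .
qed

lemma digit_sequence_power_sums:
  fixes a :: "nat \<Rightarrow> nat list" and g :: real
  assumes g: "1 < g" and len: "\<forall>n\<ge>1. length (a n) \<le> L" and ent: "\<forall>n\<ge>1. \<forall>c\<in>set (a n). c \<le> B"
  shows "summable (\<lambda>k. digval g (a (Suc k)) * (1/g) ^ Suc k)"
    and "(\<lambda>m. real (equiv_seq a m) * (1/g) ^ m) sums (\<Sum>k. digval g (a (Suc k)) * (1/g) ^ Suc k)"
proof -
  show "summable (\<lambda>k. digval g (a (Suc k)) * (1/g) ^ Suc k)"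
  proof (rule summable_comparison_test[of _ "\<lambda>k. real (L * B) * (1/g) ^ Suc k"])
    show "\<exists>N. \<forall>k\<ge>N. norm (digval g (a (Suc k)) * (1/g) ^ Suc k) \<le> real (L * B) * (1/g) ^ Suc k"
    proof (intro exI allI impI)
      fix k
      have "length (a (Suc k)) \<le> L" "\<forall>c\<in>set (a (Suc k)). c \<le> B"
        using len[rule_format, of "Suc k"] ent[rule_format, of "Suc k"] by simp_all
      then have "digval g (a (Suc k)) \<le> real (L * B)" using g by (intro digval_le) simp_all
      then have "digval g (a (Suc k)) * (1/g) ^ Suc k \<le> real (L * B) * (1/g) ^ Suc k"
        by (rule mult_right_mono) (use g in simp)
      then show "norm (digval g (a (Suc k)) * (1/g) ^ Suc k) \<le> real (L * B) * (1/g) ^ Suc k"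
        using g digval_nonneg[of g "a (Suc k)"] by (simp add: abs_mult)
    qed
    show "summable (\<lambda>k. real (L * B) * (1/g) ^ Suc k)"
      using g by (intro summable_mult summable_mult2 summable_geometric) auto
  qed
  show "(\<lambda>m. real (equiv_seq a m) * (1/g) ^ m) sums (\<Sum>k. digval g (a (Suc k)) * (1/g) ^ Suc k)"
    using equiv_seq_power_sums[of "1/g" a L B] g len ent by (simp add: digval_eq_power_sum)
qed

lemma digit_series_le_1_if_gr_le:
  assumes g: "1 < g" and len: "\<forall>n\<ge>1. length (a n) \<le> L" and ent: "\<forall>n\<ge>1. \<forall>c\<in>set (a n). c \<le> B"
    and "gr a \<le> g"
  shows "(\<Sum>k. digval g (a (Suc k)) * (1/g) ^ Suc k) \<le> 1"
  using gf_le_1_if_gr_seq_le[of "equiv_seq a", OF equiv_seq_le[OF len ent] equiv_seq_0 _ _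
      digit_sequence_power_sums(2)[OF g len ent]] g \<open>gr a \<le> g\<close>
  by (simp add: gr_def)

lemma digit_series_ge_1_if_gr_ge:
  assumes g: "1 < g" and len: "\<forall>n\<ge>1. length (a n) \<le> L" and ent: "\<forall>n\<ge>1. \<forall>c\<in>set (a n). c \<le> B"
    and "g \<le> gr a"
  shows "1 \<le> (\<Sum>k. digval g (a (Suc k)) * (1/g) ^ Suc k)"
  using gf_ge_1_if_gr_seq_ge[of "equiv_seq a", OF equiv_seq_le[OF len ent] _ _
      digit_sequence_power_sums(2)[OF g len ent]] g \<open>g \<le> gr a\<close>
  by (simp add: gr_def)

lemma gr_eq_if_digit_series_sums_1:
  assumes g: "1 < g" and len: "\<forall>n\<ge>1. length (a n) \<le> L" and ent: "\<forall>n\<ge>1. \<forall>c\<in>set (a n). c \<le> B"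
    and sums: "(\<lambda>k. digval g (a (Suc k)) * (1/g) ^ Suc k) sums 1"
  shows "gr a = g"
proof -
  have "(\<lambda>m. real (equiv_seq a m) * (1/g) ^ m) sums 1"
    using digit_sequence_power_sums(2)[OF g len ent] sums_unique[OF sums] by simp
  then have "gr_seq (equiv_seq a) = 1 / (1/g)"
    using g by (intro gr_seq_eq_if_gf_sums_1[of "equiv_seq a", OF equiv_seq_le[OF len ent] equiv_seq_0]) simp_all
  then show ?thesis using g by (simp add: gr_def)
qed

lemma greedy_digit_step:
  fixes D :: "'a set" and v :: "'a \<Rightarrow> real"
  assumes fin: "finite D" and l: "l \<in> D" and u: "u \<in> D" and w: "0 \<le> w"
    and lo: "p + v l * w + rl \<le> s" and hi: "s \<le> p + v u * w + ru"
    and gap: "maxgap (v ` D) * w \<le> ru - rl"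
  shows "\<exists>d\<in>D. p + v d * w + rl \<le> s \<and> s \<le> p + v d * w + ru"
proof -
  define Q where "Q = {d \<in> D. p + v d * w + rl \<le> s}"
  have "finite (v ` Q)" "v ` Q \<noteq> {}" using fin l lo by (auto simp: Q_def)
  then obtain d where d: "d \<in> Q" "v d = Max (v ` Q)" using Max_in by (metis imageE)
  have d_max: "v e \<le> v d" if "e \<in> Q" for e
    using d \<open>finite (v ` Q)\<close> that by simp
  have "s \<le> p + v d * w + ru"
  proof (cases "v u \<le> v d")
    case True
    then show ?thesis using hi w mult_right_mono[OF True w] by linarith
  next
    case False
    define G where "G = {e \<in> D. v d < v e}"
    have "finite (v ` G)" "v ` G \<noteq> {}" using fin u False by (auto simp: G_def)
    then obtain e where e: "e \<in> G" "v e = Min (v ` G)" using Min_in by (metis imageE)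
    have e_min: "v e \<le> v e'" if "e' \<in> G" for e'
      using e \<open>finite (v ` G)\<close> that by simp
    \<comment> \<open>the least value above d overshoots s, but lies within one gap of d\<close>
    have "e \<notin> Q" using d_max e(1) by (force simp: G_def)
    then have overshoot: "s < p + v e * w + rl" using e(1) by (auto simp: Q_def G_def)
    have "v e - v d \<le> maxgap (v ` D)"
      using d(1) e(1) e_min fin by (intro le_maxgap) (force simp: Q_def G_def)+
    then have "(v e - v d) * w \<le> ru - rl" using gap w by (meson mult_right_mono order_trans)
    then show ?thesis using overshoot by (simp add: algebra_simps)
  qed
  then show ?thesis using d(1) by (auto simp: Q_def)
qed

lemma dependent_choice_partial_sums:
  fixes D :: "nat \<Rightarrow> 'a set" and f :: "nat \<Rightarrow> 'a \<Rightarrow> 'b::comm_monoid_add"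
  assumes start: "P 0 0"
    and step: "\<And>n p. P n p \<Longrightarrow> \<exists>d\<in>D (Suc n). P (Suc n) (p + f (Suc n) d)"
  shows "\<exists>a. (\<forall>n\<ge>1. a n \<in> D n) \<and> (\<forall>n. P n (\<Sum>k<n. f (Suc k) (a (Suc k))))"
proof -
  define sel where "sel n p = (SOME d. d \<in> D (Suc n) \<and> P (Suc n) (p + f (Suc n) d))" for n p
  define ps where "ps = rec_nat 0 (\<lambda>n p. p + f (Suc n) (sel n p))"
  have sel: "sel n p \<in> D (Suc n) \<and> P (Suc n) (p + f (Suc n) (sel n p))" if "P n p" for n p
    unfolding sel_def using someI_ex[OF step[OF that, unfolded Bex_def]] .
  have P_ps: "P n (ps n)" for n
    by (induction n) (simp_all add: ps_def start sel)
  define a where "a n = sel (n - 1) (ps (n - 1))" for n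
  have "ps n = (\<Sum>k<n. f (Suc k) (a (Suc k)))" for n
    by (induction n) (simp_all add: ps_def a_def)
  moreover have "a n \<in> D n" if "n \<ge> 1" for n
    using sel[OF P_ps[of "n - 1"]] that by (simp add: a_def)
  ultimately show ?thesis using P_ps by metis
qed

lemma greedy_sequence_between_tails:
  fixes D :: "nat \<Rightarrow> 'a set" and v :: "'a \<Rightarrow> real" and l u :: "nat \<Rightarrow> 'a"
    and w rl ru :: "nat \<Rightarrow> real"
  assumes fin: "\<forall>n\<ge>1. finite (D n)" and l: "\<forall>n\<ge>1. l n \<in> D n" and u: "\<forall>n\<ge>1. u n \<in> D n"
    and w: "\<And>n. 0 \<le> w n"
    and rl_step: "\<And>n. rl n = v (l (Suc n)) * w (Suc n) + rl (Suc n)" and rl_0: "rl \<longlonglongrightarrow> 0"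
    and ru_step: "\<And>n. ru n = v (u (Suc n)) * w (Suc n) + ru (Suc n)" and ru_0: "ru \<longlonglongrightarrow> 0"
    and lo: "rl 0 \<le> s" and hi: "s \<le> ru 0"
    and gaps: "\<And>n. maxgap (v ` D (Suc n)) * w (Suc n) \<le> ru (Suc n) - rl (Suc n)"
  shows "\<exists>a. (\<forall>n\<ge>1. a n \<in> D n) \<and> (\<lambda>k. v (a (Suc k)) * w (Suc k)) sums s"
proof -
  define P where "P n p \<longleftrightarrow> p + rl n \<le> s \<and> s \<le> p + ru n" for n p
  have "\<exists>d\<in>D (Suc n). P (Suc n) (p + v d * w (Suc n))" if "P n p" for n p
    using greedy_digit_step[of "D (Suc n)" "l (Suc n)" "u (Suc n)" "w (Suc n)" p v "rl (Suc n)" s "ru (Suc n)"]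
      fin l u w gaps that rl_step[of n] ru_step[of n]
    by (auto simp: P_def add.assoc)
  moreover have "P 0 0" using lo hi by (simp add: P_def)
  ultimately obtain a where a: "\<forall>n\<ge>1. a n \<in> D n" "\<forall>n. P n (\<Sum>k<n. v (a (Suc k)) * w (Suc k))"
    using dependent_choice_partial_sums[of P D "\<lambda>n d. v d * w n"] by blast
  have "(\<lambda>n. \<Sum>k<n. v (a (Suc k)) * w (Suc k)) \<longlonglongrightarrow> s"
  proof (rule tendsto_sandwich[of "\<lambda>n. s - ru n" _ _ "\<lambda>n. s - rl n"])
    show "eventually (\<lambda>n. s - ru n \<le> (\<Sum>k<n. v (a (Suc k)) * w (Suc k))) sequentially"
      "eventually (\<lambda>n. (\<Sum>k<n. v (a (Suc k)) * w (Suc k)) \<le> s - rl n) sequentially"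
      using a(2) by (auto simp: P_def algebra_simps)
    show "(\<lambda>n. s - ru n) \<longlonglongrightarrow> s" "(\<lambda>n. s - rl n) \<longlonglongrightarrow> s"
      using tendsto_diff[OF tendsto_const ru_0, of s] tendsto_diff[OF tendsto_const rl_0, of s] by simp_all
  qed
  then show ?thesis using a(1) by (auto simp: sums_def)
qed

lemma suminf_tail_split_head:
  fixes f :: "nat \<Rightarrow> real"
  assumes "summable f"
  shows "(\<Sum>i. f (i + n)) = f n + (\<Sum>i. f (i + Suc n))"
  using suminf_minus_initial_segment[OF assms, of n] suminf_minus_initial_segment[OF assms, of "Suc n"]
  by simp

lemma suminf_tail_tendsto_0:
  fixes f :: "nat \<Rightarrow> real"
  assumes "summable f"
  shows "(\<lambda>n. \<Sum>i. f (i + n)) \<longlonglongrightarrow> 0"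
  using tendsto_diff[OF tendsto_const summable_LIMSEQ[OF assms], of "suminf f"]
  by (simp add: suminf_minus_initial_segment[OF assms])

lemma greedy_digit_sequence:
  fixes D :: "nat \<Rightarrow> 'a set" and v :: "'a \<Rightarrow> real" and l u :: "nat \<Rightarrow> 'a" and x s :: real
  assumes fin: "\<forall>n\<ge>1. finite (D n)" and l: "\<forall>n\<ge>1. l n \<in> D n" and u: "\<forall>n\<ge>1. u n \<in> D n"
    and x: "0 < x"
    and summable_l: "summable (\<lambda>k. v (l (Suc k)) * x ^ Suc k)"
    and summable_u: "summable (\<lambda>k. v (u (Suc k)) * x ^ Suc k)"
    and lo: "(\<Sum>k. v (l (Suc k)) * x ^ Suc k) \<le> s" and hi: "s \<le> (\<Sum>k. v (u (Suc k)) * x ^ Suc k)"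
    and gaps: "\<forall>n\<ge>1. maxgap (v ` D n) \<le> (\<Sum>i. (v (u (n + i + 1)) - v (l (n + i + 1))) * x ^ (i + 1))"
  shows "\<exists>a. (\<forall>n\<ge>1. a n \<in> D n) \<and> (\<lambda>k. v (a (Suc k)) * x ^ Suc k) sums s"
proof -
  define fl where "fl k = v (l (Suc k)) * x ^ Suc k" for k
  define fu where "fu k = v (u (Suc k)) * x ^ Suc k" for k
  have "summable fl" "summable fu"
    unfolding fl_def[abs_def] fu_def[abs_def] by (fact summable_l summable_u)+
  define rl where "rl n = (\<Sum>i. fl (i + n))" for n
  define ru where "ru n = (\<Sum>i. fu (i + n))" for n
  have gap_tail: "maxgap (v ` D (Suc n)) * x ^ Suc n \<le> ru (Suc n) - rl (Suc n)" for n
  proof -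
    let ?r = "\<lambda>i. (v (u (Suc n + i + 1)) - v (l (Suc n + i + 1))) * x ^ (i + 1)"
    have diff_eq: "(\<lambda>i. fu (i + Suc n) - fl (i + Suc n)) = (\<lambda>i. x ^ Suc n * ?r i)"
      by (simp add: fl_def fu_def algebra_simps power_add)
    have shifted: "summable (\<lambda>i. fu (i + Suc n))" "summable (\<lambda>i. fl (i + Suc n))"
      using \<open>summable fl\<close> \<open>summable fu\<close> by (simp_all only: summable_iff_shift)
    then have "summable (\<lambda>i. fu (i + Suc n) - fl (i + Suc n))" by (rule summable_diff)
    then have "summable (\<lambda>i. x ^ Suc n * ?r i)" by (simp only: diff_eq)
    then have "summable ?r" using summable_cmult_iff[of "x ^ Suc n" ?r] x by simp
    have "ru (Suc n) - rl (Suc n) = (\<Sum>i. fu (i + Suc n) - fl (i + Suc n))"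
      unfolding ru_def rl_def using shifted by (rule suminf_diff)
    also have "\<dots> = x ^ Suc n * (\<Sum>i. ?r i)"
      unfolding diff_eq by (rule suminf_mult[OF \<open>summable ?r\<close>])
    finally have "ru (Suc n) - rl (Suc n) = x ^ Suc n * (\<Sum>i. ?r i)" .
    moreover have "maxgap (v ` D (Suc n)) \<le> (\<Sum>i. ?r i)"
      using gaps[rule_format, of "Suc n"] by simp
    ultimately show ?thesis
      using x by (simp add: mult.commute mult_left_mono)
  qed
  show ?thesis
  proof (rule greedy_sequence_between_tails[OF fin l u _ _ _ _ _ _ _ gap_tail])
    show "rl n = v (l (Suc n)) * x ^ Suc n + rl (Suc n)" "ru n = v (u (Suc n)) * x ^ Suc n + ru (Suc n)" for n
      using suminf_tail_split_head[OF \<open>summable fl\<close>, of n] suminf_tail_split_head[OF \<open>summable fu\<close>, of n]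
      by (simp_all add: rl_def ru_def fl_def fu_def)
    show "rl \<longlonglongrightarrow> 0" "ru \<longlonglongrightarrow> 0"
      unfolding rl_def[abs_def] ru_def[abs_def]
      by (intro suminf_tail_tendsto_0 \<open>summable fl\<close> \<open>summable fu\<close>)+
    show "rl 0 \<le> s" "s \<le> ru 0" using lo hi by (simp_all add: rl_def ru_def fl_def fu_def)
  qed (use x in simp)
qed

theorem lemma3p4:
  fixes D :: "nat \<Rightarrow> nat list set" and \<gamma> :: real and l u :: "nat \<Rightarrow> nat list"
  assumes fin: "\<forall>n\<ge>1. finite (D n) \<and> D n \<noteq> {}"
    and digits: "\<forall>n\<ge>1. \<forall>d\<in>D n. d \<noteq> []"
    and bdd: "\<exists>L B. \<forall>n\<ge>1. \<forall>d\<in>D n. length d \<le> L \<and> (\<forall>c\<in>set d. c \<le> B)"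
    and gam: "\<gamma> > 1"
    and l_min: "\<forall>n\<ge>1. l n \<in> D n \<and> (\<forall>d\<in>D n. digval \<gamma> (l n) \<le> digval \<gamma> d)"
    and u_max: "\<forall>n\<ge>1. u n \<in> D n \<and> (\<forall>d\<in>D n. digval \<gamma> d \<le> digval \<gamma> (u n))"
    and lower: "gr l \<le> \<gamma>"
    and upper: "\<gamma> \<le> gr u"
    and gaps: "\<forall>n\<ge>1. maxgap (digval \<gamma> ` D n)
                 \<le> (\<Sum>i. (digval \<gamma> (u (n + i + 1)) - digval \<gamma> (l (n + i + 1)))
                          * \<gamma> powi (- int (i + 1)))"
  shows "\<exists>a. (\<forall>n\<ge>1. a n \<in> D n) \<and> gr a = \<gamma>"
proof -
  obtain L B where LB: "\<forall>n\<ge>1. \<forall>d\<in>D n. length d \<le> L \<and> (\<forall>c\<in>set d. c \<le> B)" using bdd by blast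
  have bounds: "\<forall>n\<ge>1. length (a n) \<le> L" "\<forall>n\<ge>1. \<forall>c\<in>set (a n). c \<le> B"
    if "\<forall>n\<ge>1. a n \<in> D n" for a
    using LB that by auto
  \<comment> \<open>only l n, u n \<in> D n is needed, not their extremality\<close>
  have l_in: "\<forall>n\<ge>1. l n \<in> D n" and u_in: "\<forall>n\<ge>1. u n \<in> D n"
    using l_min u_max by auto
  have "\<gamma> powi (- int k) = (1/\<gamma>) ^ k" for k
    by (simp add: power_int_minus power_one_over inverse_eq_divide)
  then have "\<forall>n\<ge>1. maxgap (digval \<gamma> ` D n)
      \<le> (\<Sum>i. (digval \<gamma> (u (n + i + 1)) - digval \<gamma> (l (n + i + 1))) * (1/\<gamma>) ^ (i + 1))"
    using gaps by (simp only:)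
  then obtain a where a: "\<forall>n\<ge>1. a n \<in> D n"
      "(\<lambda>k. digval \<gamma> (a (Suc k)) * (1/\<gamma>) ^ Suc k) sums 1"
    using greedy_digit_sequence[OF _ l_in u_in _
        digit_sequence_power_sums(1)[OF gam bounds[OF l_in]]
        digit_sequence_power_sums(1)[OF gam bounds[OF u_in]]
        digit_series_le_1_if_gr_le[OF gam bounds[OF l_in] lower]
        digit_series_ge_1_if_gr_ge[OF gam bounds[OF u_in] upper]] fin gam
    by auto
  then show ?thesis using gr_eq_if_digit_series_sums_1[OF gam bounds[OF a(1)]] by blast
qed

end
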